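(* Let $X$ be a minimal dendric shift over $\mathcal{A}$ which is planar for $(\le^L,\le^R)$. (1) Every long enough left special factor $w$ of $X$ satisfies $E^L_X(w)=\{a,b\}$ where $a,b$ are consecutive for $\le^L$; moreover, for any two $\le^L$-consecutive letters $a,b$ and every $n\in\mathbb{N}$, there is a unique left special factor $w$ of length $n$ with $\{a,b\}\subseteq E^L_X(w)$. (2) Every long enough right special factor $w$ satisfies $E^R_X(w)=\{a,b\}$ where $a,b$ are consecutive for $\le^R$; moreover, for any two $\le^R$-consecutive letters $a,b$ and every $n\in\mathbb{N}$, there is a unique right special factor $w$ of length $n$ with $\{a,b\}\subseteq E^R_X(w)$.
   Context: A shift space over a finite alphabet $\mathcal{A}$ is a nonempty closed shift-invariant $X\subseteq\mathcal{A}^{\mathbb{Z}}$ with all letters in its language $\mathcal{L}(X)$; minimal if no nonempty proper closed shift-invariant subset. For $w\in\mathcal{L}(X)$: $E^L_X(w)=\{a:aw\in\mathcal{L}(X)\}$, $E^R_X(w)=\{b:wb\in\mathcal{L}(X)\}$, $E_X(w)=\{(a,b):awb\in\mathcal{L}(X)\}$; $w$ left (right) special if $|E^L_X(w)|\ge2$ ($|E^R_X(w)|\ge2$). $\mathcal{E}_X(w)$ is the bipartite graph on disjoint copies of $E^L_X(w),E^R_X(w)$ with edges $E_X(w)$; $X$ is dendric if each $\mathcal{E}_X(w)$ is a tree. For total orders $\le^L,\le^R$ on $\mathcal{A}$, $w$ is planar for $(\le^L,\le^R)$ if for all $(a_1,b_1),(a_2,b_2)\in E_X(w)$, $a_1<^La_2$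 implies $b_1\le^Rb_2$; $X$ is planar for $(\le^L,\le^R)$ if every word of $\mathcal{L}(X)$ is. *)

theory Defs
  imports "HOL-Analysis.Analysis"
begin

definition full_shift_top :: "(int \<Rightarrow> 'a) topology" where
  "full_shift_top = product_topology (\<lambda>_. discrete_topology (UNIV :: 'a set)) (UNIV :: int set)"

definition shift_map :: "(int \<Rightarrow> 'a) \<Rightarrow> (int \<Rightarrow> 'a)" where
  "shift_map x = (\<lambda>i. x (i + 1))"

definition shift_invariant :: "(int \<Rightarrow> 'a) set \<Rightarrow> bool" where
  "shift_invariant X \<longleftrightarrow> shift_map ` X = X"

definition lang :: "(int \<Rightarrow> 'a) set \<Rightarrow> 'a list set" where
  "lang X = {w. \<exists>x\<in>X. \<exists>i::int. \<forall>k<length w. x (i + int k) = w ! k}"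

definition shift_space :: "(int \<Rightarrow> 'a::finite) set \<Rightarrow> bool" where
  "shift_space X \<longleftrightarrow> X \<noteq> {} \<and> closedin full_shift_top X \<and> shift_invariant X
     \<and> (\<forall>a. [a] \<in> lang X)"

definition minimal_shift :: "(int \<Rightarrow> 'a::finite) set \<Rightarrow> bool" where
  "minimal_shift X \<longleftrightarrow> shift_space X \<and>
     (\<forall>Y. Y \<subseteq> X \<and> Y \<noteq> {} \<and> closedin full_shift_top Y \<and> shift_invariant Y \<longrightarrow> Y = X)"

definition extL :: "(int \<Rightarrow> 'a) set \<Rightarrow> 'a list \<Rightarrow> 'a set" where
  "extL X w = {a. a # w \<in> lang X}"

definition extR :: "(int \<Rightarrow> 'a) set \<Rightarrow> 'a list \<Rightarrow> 'a set" where
  "extR X w = {b. w @ [b] \<in> lang X}"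

definition ext :: "(int \<Rightarrow> 'a) set \<Rightarrow> 'a list \<Rightarrow> ('a \<times> 'a) set" where
  "ext X w = {(a, b). a # w @ [b] \<in> lang X}"

definition left_special :: "(int \<Rightarrow> 'a) set \<Rightarrow> 'a list \<Rightarrow> bool" where
  "left_special X w \<longleftrightarrow> card (extL X w) \<ge> 2"

definition right_special :: "(int \<Rightarrow> 'a) set \<Rightarrow> 'a list \<Rightarrow> bool" where
  "right_special X w \<longleftrightarrow> card (extR X w) \<ge> 2"

definition graph_connected :: "'v set \<Rightarrow> ('v \<Rightarrow> 'v \<Rightarrow> bool) \<Rightarrow> bool" where
  "graph_connected V adj \<longleftrightarrow>
     (\<forall>u\<in>V. \<forall>v\<in>V. (u, v) \<in> {(p, q). p \<in> V \<and> q \<in> V \<and> adj p q}\<^sup>*)"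

definition graph_acyclic :: "'v set \<Rightarrow> ('v \<Rightarrow> 'v \<Rightarrow> bool) \<Rightarrow> bool" where
  "graph_acyclic V adj \<longleftrightarrow>
     \<not> (\<exists>vs. length vs \<ge> 3 \<and> distinct vs \<and> set vs \<subseteq> V
          \<and> (\<forall>i. Suc i < length vs \<longrightarrow> adj (vs ! i) (vs ! Suc i))
          \<and> adj (last vs) (hd vs))"

definition graph_tree :: "'v set \<Rightarrow> ('v \<Rightarrow> 'v \<Rightarrow> bool) \<Rightarrow> bool" where
  "graph_tree V adj \<longleftrightarrow> V \<noteq> {} \<and> graph_connected V adj \<and> graph_acyclic V adj"

text \<open>Extension graph: bipartite graph on disjoint copies (Inl / Inr) of extL and extR.\<close>
definition ext_graph_vertices :: "(int \<Rightarrow> 'a) set \<Rightarrow> 'a list \<Rightarrow> ('a + 'a) set" where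
  "ext_graph_vertices X w = Inl ` extL X w \<union> Inr ` extR X w"

definition ext_graph_adj :: "(int \<Rightarrow> 'a) set \<Rightarrow> 'a list \<Rightarrow> ('a + 'a) \<Rightarrow> ('a + 'a) \<Rightarrow> bool" where
  "ext_graph_adj X w u v \<longleftrightarrow>
     (\<exists>a b. (a, b) \<in> ext X w \<and> ((u = Inl a \<and> v = Inr b) \<or> (u = Inr b \<and> v = Inl a)))"

definition dendric :: "(int \<Rightarrow> 'a::finite) set \<Rightarrow> bool" where
  "dendric X \<longleftrightarrow> (\<forall>w\<in>lang X. graph_tree (ext_graph_vertices X w) (ext_graph_adj X w))"

text \<open>Total orders on the alphabet are given as relations (non-strict, linear orders on UNIV).\<close>
definition planar_word :: "(int \<Rightarrow> 'a) set \<Rightarrow> 'a rel \<Rightarrow> 'a rel \<Rightarrow> 'a list \<Rightarrow> bool" where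
  "planar_word X rL rR w \<longleftrightarrow>
     (\<forall>a1 b1 a2 b2. (a1, b1) \<in> ext X w \<and> (a2, b2) \<in> ext X w
        \<and> (a1, a2) \<in> rL \<and> a1 \<noteq> a2 \<longrightarrow> (b1, b2) \<in> rR)"

definition planar :: "(int \<Rightarrow> 'a) set \<Rightarrow> 'a rel \<Rightarrow> 'a rel \<Rightarrow> bool" where
  "planar X rL rR \<longleftrightarrow> (\<forall>w\<in>lang X. planar_word X rL rR w)"

definition consecutive :: "'a rel \<Rightarrow> 'a \<Rightarrow> 'a \<Rightarrow> bool" where
  "consecutive r a b \<longleftrightarrow> a \<noteq> b \<and> (a, b) \<in> r \<and>
     \<not> (\<exists>c. c \<noteq> a \<and> c \<noteq> b \<and> (a, c) \<in> r \<and> (c, b) \<in> r)"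

end

theory Submission
  imports Defs
begin

text \<open>Planarity makes the set of left extensions of every factor an interval for the left
  order, and it ties the right extensions of a middle letter to those of its neighbours:
  if a < b < c and au, cu are factors, then bv with v as long as u is a factor only for v = u.
  Together with uniform recurrence this excludes three left extensions of long factors, so a
  long left special factor has exactly two left extensions, and they are consecutive. For
  consecutive letters a < b, connectedness of the extension graph of a common right context w
  gives a common extension of aw and bw, and the absence of 4-cycles makes such a w of given
  length unique. The statements on the right follow by applying all this to the reversed
  language.\<close>

context
  fixes r :: "'a rel"
  assumes lin: "linear_order_on UNIV r"
begin

lemma linear_order_on_UNIV_refl: "(x, x) \<in> r"
  using lin by (auto simp: linear_order_on_def partial_order_on_def preorder_on_def refl_on_def)

lemma linear_order_on_UNIV_trans: "(x, y) \<in> r \<Longrightarrow> (y, z) \<in> r \<Longrightarrow> (x, z) \<in> r"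
  using lin unfolding linear_order_on_def partial_order_on_def preorder_on_def by (meson transD)

lemma linear_order_on_UNIV_antisym: "(x, y) \<in> r \<Longrightarrow> (y, x) \<in> r \<Longrightarrow> x = y"
  using lin unfolding linear_order_on_def partial_order_on_def by (meson antisymD)

lemma linear_order_on_UNIV_total: "(x, y) \<notin> r \<Longrightarrow> (y, x) \<in> r"
  using lin linear_order_on_UNIV_refl unfolding linear_order_on_def total_on_def by (metis UNIV_I)

lemma linear_order_on_UNIV_chain3:
  assumes "x \<in> A" "y \<in> A" "z \<in> A" "x \<noteq> y" "y \<noteq> z" "x \<noteq> z"
  obtains p q s where "p \<in> A" "q \<in> A" "s \<in> A" "(p, q) \<in> r" "p \<noteq> q" "(q, s) \<in> r" "q \<noteq> s"
  using linear_order_on_UNIV_total[of x y] linear_order_on_UNIV_total[of y z]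
    linear_order_on_UNIV_total[of x z] assms that
  by metis

lemma consecutive_le_if_above:
  assumes "consecutive r a b" "(a, y) \<in> r" "y \<noteq> a"
  shows "(b, y) \<in> r"
  using assms linear_order_on_UNIV_refl linear_order_on_UNIV_total unfolding consecutive_def by metis

end

section \<open>Planar dendric languages\<close>

definition left_exts :: "'a list set \<Rightarrow> 'a list \<Rightarrow> 'a set" where
  "left_exts L w = {a. a # w \<in> L}"

definition right_exts :: "'a list set \<Rightarrow> 'a list \<Rightarrow> 'a set" where
  "right_exts L w = {b. w @ [b] \<in> L}"

text \<open>The two cut conditions express that the extension graphs are connected, no_square that
  they have no 4-cycles. The language is kept abstract so that reversal can swap the two sides.\<close>

locale planar_dendric_language =
  fixes L :: "'a::finite list set" and rL rR :: "'a rel"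
  assumes prefix_closed: "u @ v \<in> L \<Longrightarrow> u \<in> L"
    and suffix_closed: "u @ v \<in> L \<Longrightarrow> v \<in> L"
    and right_extendable: "w \<in> L \<Longrightarrow> \<exists>c. w @ [c] \<in> L"
    and left_extendable: "w \<in> L \<Longrightarrow> \<exists>c. c # w \<in> L"
    and letter_in_lang: "[a] \<in> L"
    and linear_rL: "linear_order_on UNIV rL"
    and linear_rR: "linear_order_on UNIV rR"
    and planar_exts: "a1 # w @ [b1] \<in> L \<Longrightarrow> a2 # w @ [b2] \<in> L \<Longrightarrow> (a1, a2) \<in> rL \<Longrightarrow> a1 \<noteq> a2
      \<Longrightarrow> (b1, b2) \<in> rR"
    and left_cut_crossed: "w \<in> L \<Longrightarrow> S \<subseteq> left_exts L w \<Longrightarrow> S \<noteq> {} \<Longrightarrow> left_exts L w - S \<noteq> {}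
      \<Longrightarrow> \<exists>d x y. x \<in> S \<and> y \<in> left_exts L w - S \<and> x # w @ [d] \<in> L \<and> y # w @ [d] \<in> L"
    and right_cut_crossed: "w \<in> L \<Longrightarrow> T \<subseteq> right_exts L w \<Longrightarrow> T \<noteq> {} \<Longrightarrow> right_exts L w - T \<noteq> {}
      \<Longrightarrow> \<exists>e x y. x \<in> T \<and> y \<in> right_exts L w - T \<and> e # w @ [x] \<in> L \<and> e # w @ [y] \<in> L"
    and no_square: "x \<noteq> y \<Longrightarrow> d \<noteq> e \<Longrightarrow> x # w @ [d] \<in> L \<Longrightarrow> y # w @ [d] \<in> L \<Longrightarrow> x # w @ [e] \<in> L
      \<Longrightarrow> y # w @ [e] \<notin> L"
    and uniformly_recurrent: "\<exists>R. \<forall>w\<in>L. length w \<ge> R \<longrightarrow> b \<in> set w"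
begin

lemmas rL_refl = linear_order_on_UNIV_refl[OF linear_rL]
  and rL_antisym = linear_order_on_UNIV_antisym[OF linear_rL]
  and rL_trans = linear_order_on_UNIV_trans[OF linear_rL]
  and rL_total = linear_order_on_UNIV_total[OF linear_rL]
  and rR_antisym = linear_order_on_UNIV_antisym[OF linear_rR]

lemma prefix_closed_Cons: "a # u @ v \<in> L \<Longrightarrow> a # u \<in> L"
  using prefix_closed[of "a # u" v] by simp

lemma Cons_in_lang_tail: "a # w \<in> L \<Longrightarrow> w \<in> L"
  using suffix_closed[of "[a]" w] by simp

lemma nth_Cons_drop_in_lang: "w \<in> L \<Longrightarrow> i < length w \<Longrightarrow> w ! i # drop (Suc i) w \<in> L"
  using suffix_closed[of "take i w" "drop i w"] by (simp add: Cons_nth_drop_Suc)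

lemma left_extendable_length: "w \<in> L \<Longrightarrow> \<exists>z. length z = n \<and> z @ w \<in> L"
proof (induction n)
  case (Suc n)
  then obtain z where "length z = n" "z @ w \<in> L" by blast
  moreover obtain c where "c # z @ w \<in> L" using left_extendable[OF \<open>z @ w \<in> L\<close>] by blast
  ultimately show ?case by (intro exI[of _ "c # z"]) simp
qed simp

lemma right_ext_squeezed:
  assumes "x # w @ [d] \<in> L" "y # w @ [d] \<in> L" "(x, a) \<in> rL" "(a, y) \<in> rL" "a # w \<in> L"
  shows "a # w @ [d] \<in> L"
proof (cases "a = x \<or> a = y")
  case True then show ?thesis using assms by auto
next
  case False
  obtain e where e: "a # w @ [e] \<in> L" using right_extendable[OF assms(5)] by auto
  have "(d, e) \<in> rR" using planar_exts[OF assms(1) e assms(3)] False by blast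
  moreover have "(e, d) \<in> rR" using planar_exts[OF e assms(2) assms(4)] False by blast
  ultimately show ?thesis using e rR_antisym by metis
qed

lemma left_exts_convex:
  "x \<in> left_exts L w \<Longrightarrow> z \<in> left_exts L w \<Longrightarrow> (x, y) \<in> rL \<Longrightarrow> (y, z) \<in> rL \<Longrightarrow> y \<in> left_exts L w"
proof (induction w arbitrary: x z rule: rev_induct)
  case Nil then show ?case using letter_in_lang by (simp add: left_exts_def)
next
  case (snoc c w)
  then have xz: "x # w @ [c] \<in> L" "z # w @ [c] \<in> L" by (auto simp: left_exts_def)
  then have "y # w \<in> L"
    using snoc.IH[of x z] snoc.prems(3,4) prefix_closed_Cons by (simp add: left_exts_def)
  then show ?case
    using right_ext_squeezed[OF xz snoc.prems(3,4)] by (simp add: left_exts_def)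
qed

lemma common_right_ext_of_consecutive:
  assumes ab: "consecutive rL a b" and w: "a # w \<in> L" "b # w \<in> L"
  obtains d where "a # w @ [d] \<in> L" "b # w @ [d] \<in> L"
proof -
  define S where "S = {x \<in> left_exts L w. (x, a) \<in> rL}"
  have "a \<in> S" "b \<in> left_exts L w - S"
    using w ab rL_refl rL_antisym by (auto simp: S_def left_exts_def consecutive_def)
  then obtain d x y where d: "x \<in> S" "y \<in> left_exts L w - S" "x # w @ [d] \<in> L" "y # w @ [d] \<in> L"
    using left_cut_crossed[OF Cons_in_lang_tail[OF w(1)], of S] by (auto simp: S_def)
  have xa: "(x, a) \<in> rL" and ay: "(a, y) \<in> rL" "y \<noteq> a"
    using d rL_total rL_refl by (auto simp: S_def)
  have "(a, b) \<in> rL" "(b, y) \<in> rL"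
    using ab consecutive_le_if_above[OF linear_rL ab ay] by (auto simp: consecutive_def)
  then have "a # w @ [d] \<in> L" "b # w @ [d] \<in> L"
    using right_ext_squeezed[OF d(3,4)] xa ay w rL_trans by blast+
  then show ?thesis using that by blast
qed

lemma common_word_of_consecutive_left_exts:
  "consecutive rL a b \<Longrightarrow> \<exists>w. length w = n \<and> a # w \<in> L \<and> b # w \<in> L"
proof (induction n)
  case 0 then show ?case using letter_in_lang by auto
next
  case (Suc n)
  then obtain w where "length w = n" "a # w \<in> L" "b # w \<in> L" by blast
  moreover from this obtain d where "a # w @ [d] \<in> L" "b # w @ [d] \<in> L"
    using common_right_ext_of_consecutive[OF Suc.prems] by blast
  ultimately show ?case by (intro exI[of _ "w @ [d]"]) simp
qed

lemma common_word_of_left_exts_unique: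
  assumes "a \<noteq> b" "a # u \<in> L" "b # u \<in> L" "a # v \<in> L" "b # v \<in> L" "length u = length v"
  shows "u = v"
  using assms(2-6)
proof (induction u arbitrary: v rule: rev_induct)
  case (snoc c u)
  then obtain v' e where v: "v = v' @ [e]" by (metis length_Suc_conv_rev length_append_singleton)
  have "a # u \<in> L" "b # u \<in> L" "a # v' \<in> L" "b # v' \<in> L"
    using snoc.prems(1-4) v by (auto intro: prefix_closed_Cons)
  moreover have "length u = length v'" using snoc.prems(5) v by simp
  ultimately have "u = v'" by (rule snoc.IH)
  show ?case
  proof (rule ccontr)
    assume "u @ [c] \<noteq> v"
    then have ce: "c \<noteq> e" using \<open>u = v'\<close> v by simp
    show False using no_square[OF assms(1) ce, of u] snoc.prems \<open>u = v'\<close> v by simp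
  qed
qed simp

lemma middle_left_ext_same_word:
  assumes abc: "(a, b) \<in> rL" "a \<noteq> b" "(b, c) \<in> rL" "b \<noteq> c"
    and "a # u \<in> L" "c # u \<in> L" "b # v \<in> L" "length v = length u"
  shows "v = u"
  using assms(5-8)
proof (induction u arbitrary: v rule: rev_induct)
  case (snoc e u)
  then obtain v' d where v: "v = v' @ [d]" by (metis length_Suc_conv_rev length_append_singleton)
  have "a # u \<in> L" "c # u \<in> L" "b # v' \<in> L"
    using snoc.prems(1-3) v by (auto intro: prefix_closed_Cons)
  moreover have "length v' = length u" using snoc.prems(4) v by simp
  ultimately have "v' = u" by (rule snoc.IH)
  then have "(e, d) \<in> rR" "(d, e) \<in> rR"
    using planar_exts[of a u e b d] planar_exts[of b u d c e] snoc.prems(1-3) v abc by auto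
  then show ?case using rR_antisym v \<open>v' = u\<close> by blast
qed simp

lemma word_after_middle_is_prefix:
  assumes abc: "(a, b) \<in> rL" "a \<noteq> b" "(b, c) \<in> rL" "b \<noteq> c"
    and "a # U \<in> L" "c # U \<in> L" "b # v \<in> L" "length v \<le> length U"
  shows "v = take (length v) U"
proof (rule middle_left_ext_same_word[OF abc])
  show "a # take (length v) U \<in> L" "c # take (length v) U \<in> L"
    using assms(5,6) prefix_closed_Cons[of _ "take (length v) U" "drop (length v) U"] by simp_all
qed (use assms(7,8) in simp_all)

text \<open>If aU, bU and cU are factors with U of length 2R, every word of length at most 2R
  following b is a prefix of U, and b occurs in every factor of length R. An occurrence of b at
  a position s < R of U makes U periodic with period s + 1, while an occurrence of b less than
  R letters to the left of a puts a at a position t < R of U and b at position t + 1 + s; the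
  period then forces a = b.\<close>

lemma three_left_exts_bounded:
  assumes abc: "(a, b) \<in> rL" "a \<noteq> b" "(b, c) \<in> rL" "b \<noteq> c"
  obtains n where "\<And>u. length u = n \<Longrightarrow> \<not> (a # u \<in> L \<and> b # u \<in> L \<and> c # u \<in> L)"
proof -
  obtain R where R: "\<And>w. w \<in> L \<Longrightarrow> length w \<ge> R \<Longrightarrow> b \<in> set w"
    using uniformly_recurrent[of b] by blast
  show ?thesis
  proof (rule that[of "2 * R"], rule notI)
    fix U assume U: "length U = 2 * R" "a # U \<in> L \<and> b # U \<in> L \<and> c # U \<in> L"
    have UL: "U \<in> L" using U Cons_in_lang_tail by blast
    have prefix: "U ! k = v ! k" if "b # v \<in> L" "length v \<le> 2 * R" "k < length v" for v k
      using word_after_middle_is_prefix[OF abc _ _ that(1)] U that(2,3) by (metis nth_take)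
    have "take R U \<in> L" using prefix_closed[of "take R U" "drop R U"] UL by simp
    then obtain s where s: "s < R" "U ! s = b"
      using R[of "take R U"] U(1) by (auto simp: in_set_conv_nth)
    have period: "U ! (k + Suc s) = U ! k" if "k + Suc s < 2 * R" for k
      using prefix[of "drop (Suc s) U" k] nth_Cons_drop_in_lang[OF UL, of s] s U(1) that
      by (simp add: add.commute)
    have "a # take R U \<in> L" using U prefix_closed_Cons[of a "take R U" "drop R U"] by simp
    then obtain z where z: "length z = R" "z @ a # take R U \<in> L" using left_extendable_length by blast
    then have "b \<in> set z" using R[of z] prefix_closed by blast
    then obtain i where i: "i < R" "z ! i = b" using z(1) by (auto simp: in_set_conv_nth)
    define t where "t = R - Suc i"
    define W where "W = drop (Suc i) z @ a # take R U"
    have bW: "b # W \<in> L"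
      using nth_Cons_drop_in_lang[OF z(2), of i] i z(1) by (simp add: W_def nth_append)
    have lW: "length W = t + 1 + R" "t < R" using i z(1) U(1) by (simp_all add: W_def t_def)
    have "a = U ! t" using prefix[OF bW, of t] lW U(1) z(1) by (simp add: W_def t_def nth_append)
    also have "\<dots> = U ! (t + Suc s)" using period[of t] s lW by simp
    also have "\<dots> = b"
      using prefix[OF bW, of "t + Suc s"] lW U(1) z(1) s by (simp add: W_def t_def nth_append)
    finally show False using abc by simp
  qed
qed

lemma eventually_no_three_left_exts:
  "\<forall>\<^sub>F n in sequentially. \<forall>a b c. (a, b) \<in> rL \<longrightarrow> a \<noteq> b \<longrightarrow> (b, c) \<in> rL \<longrightarrow> b \<noteq> c \<longrightarrow>
     (\<forall>u. length u = n \<longrightarrow> \<not> (a # u \<in> L \<and> b # u \<in> L \<and> c # u \<in> L))"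
proof (intro eventually_all_finite)
  fix a b c
  show "\<forall>\<^sub>F n in sequentially. (a, b) \<in> rL \<longrightarrow> a \<noteq> b \<longrightarrow> (b, c) \<in> rL \<longrightarrow> b \<noteq> c \<longrightarrow>
     (\<forall>u. length u = n \<longrightarrow> \<not> (a # u \<in> L \<and> b # u \<in> L \<and> c # u \<in> L))"
  proof (cases "(a, b) \<in> rL \<and> a \<noteq> b \<and> (b, c) \<in> rL \<and> b \<noteq> c")
    case True
    then obtain n where n: "\<And>u. length u = n \<Longrightarrow> \<not> (a # u \<in> L \<and> b # u \<in> L \<and> c # u \<in> L)"
      using three_left_exts_bounded by metis
    have "\<not> (a # u \<in> L \<and> b # u \<in> L \<and> c # u \<in> L)" if "length u \<ge> n" for u
      using n[of "take n u"] that prefix_closed_Cons[of _ "take n u" "drop n u"] by auto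
    then show ?thesis unfolding eventually_sequentially by auto
  qed auto
qed

lemma consecutive_if_left_exts_pair:
  assumes "left_exts L w = {p, q}" "(p, q) \<in> rL" "p \<noteq> q"
  shows "consecutive rL p q"
proof -
  have "c \<in> {p, q}" if "(p, c) \<in> rL" "(c, q) \<in> rL" for c
    using left_exts_convex[where x=p and y=c and z=q and w=w] that unfolding assms(1) by blast
  then show ?thesis using assms(2,3) unfolding consecutive_def by blast
qed

lemma long_left_special_exts_consecutive:
  "\<exists>N. \<forall>w\<in>L. length w \<ge> N \<and> card (left_exts L w) \<ge> 2 \<longrightarrow>
     (\<exists>a b. left_exts L w = {a, b} \<and> (consecutive rL a b \<or> consecutive rL b a))"
proof -
  obtain N where N: "\<And>n a b c u. n \<ge> N \<Longrightarrow> (a, b) \<in> rL \<Longrightarrow> a \<noteq> b \<Longrightarrow> (b, c) \<in> rL \<Longrightarrow> b \<noteq> c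
      \<Longrightarrow> length u = n \<Longrightarrow> \<not> (a # u \<in> L \<and> b # u \<in> L \<and> c # u \<in> L)"
    using eventually_no_three_left_exts unfolding eventually_sequentially by blast
  have "\<exists>a b. left_exts L w = {a, b} \<and> (consecutive rL a b \<or> consecutive rL b a)"
    if w: "length w \<ge> N" "card (left_exts L w) \<ge> 2" for w
  proof -
    obtain x y where xy: "x \<in> left_exts L w" "y \<in> left_exts L w" "x \<noteq> y"
      using w(2) card_le_Suc0_iff_eq[of "left_exts L w"] by force
    have "z \<in> {x, y}" if z: "z \<in> left_exts L w" for z
    proof (rule ccontr)
      assume "z \<notin> {x, y}"
      then obtain p q s where "p \<in> left_exts L w" "q \<in> left_exts L w" "s \<in> left_exts L w"
          "(p, q) \<in> rL" "p \<noteq> q" "(q, s) \<in> rL" "q \<noteq> s"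
        using linear_order_on_UNIV_chain3[OF linear_rL xy(1,2) z] xy(3) by blast
      then show False using N[OF w(1)] by (auto simp: left_exts_def)
    qed
    then have E: "left_exts L w = {x, y}" using xy by blast
    show ?thesis
    proof (cases "(x, y) \<in> rL")
      case True then show ?thesis using E consecutive_if_left_exts_pair xy(3) by blast
    next
      case False
      then have "consecutive rL y x"
        using E rL_total xy(3) consecutive_if_left_exts_pair[of w y x] by (simp add: insert_commute)
      then show ?thesis using E by blast
    qed
  qed
  then show ?thesis by blast
qed

lemma left_special_of_consecutive_unique:
  assumes ab: "consecutive rL a b"
  shows "\<exists>!w. w \<in> L \<and> length w = n \<and> card (left_exts L w) \<ge> 2 \<and> {a, b} \<subseteq> left_exts L w"
proof -
  obtain w where w: "length w = n" "a # w \<in> L" "b # w \<in> L"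
    using common_word_of_consecutive_left_exts[OF ab] by blast
  show ?thesis
  proof
    have "card {a, b} \<le> card (left_exts L w)"
      using w by (intro card_mono) (auto simp: left_exts_def)
    then show "w \<in> L \<and> length w = n \<and> card (left_exts L w) \<ge> 2 \<and> {a, b} \<subseteq> left_exts L w"
      using w ab Cons_in_lang_tail by (auto simp: left_exts_def consecutive_def)
  next
    fix v assume "v \<in> L \<and> length v = n \<and> card (left_exts L v) \<ge> 2 \<and> {a, b} \<subseteq> left_exts L v"
    then show "v = w"
      using common_word_of_left_exts_unique[of a b v w] w ab by (simp add: left_exts_def consecutive_def)
  qed
qed

end

section \<open>Reversal\<close>

lemma in_rev_image_iff: "v \<in> rev ` L \<longleftrightarrow> rev v \<in> L"
  by (metis image_iff rev_rev_ident)

lemma left_exts_rev_image: "left_exts (rev ` L) w = right_exts L (rev w)"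
  by (auto simp: left_exts_def right_exts_def in_rev_image_iff)

lemma right_exts_rev_image: "right_exts (rev ` L) w = left_exts L (rev w)"
  by (auto simp: left_exts_def right_exts_def in_rev_image_iff)

lemma Ex1_rev_iff: "(\<exists>!w. P (rev w)) \<longleftrightarrow> (\<exists>!w. P w)"
  by (metis rev_rev_ident)

lemma planar_dendric_language_rev:
  assumes "planar_dendric_language L rL rR"
  shows "planar_dendric_language (rev ` L) rR rL"
proof -
  interpret planar_dendric_language L rL rR by fact
  show ?thesis
  proof
    fix u v assume "u @ v \<in> rev ` L"
    then show "u \<in> rev ` L" "v \<in> rev ` L"
      using suffix_closed[of "rev v" "rev u"] prefix_closed[of "rev v" "rev u"]
      by (simp_all add: in_rev_image_iff)
  next
    fix w assume "w \<in> rev ` L"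
    then show "\<exists>c. w @ [c] \<in> rev ` L" "\<exists>c. c # w \<in> rev ` L"
      using left_extendable[of "rev w"] right_extendable[of "rev w"]
      by (simp_all add: in_rev_image_iff)
  next
    fix a show "[a] \<in> rev ` L" using letter_in_lang by (simp add: in_rev_image_iff)
  next
    fix a1 w b1 a2 b2
    assume "a1 # w @ [b1] \<in> rev ` L" "a2 # w @ [b2] \<in> rev ` L" "(a1, a2) \<in> rR" "a1 \<noteq> a2"
    then show "(b1, b2) \<in> rL"
      using planar_exts[of b2 "rev w" a2 b1 a1] rL_total[of b1 b2] rL_refl[of b1] rR_antisym
      by (auto simp: in_rev_image_iff)
  next
    fix w S
    assume "w \<in> rev ` L" "S \<subseteq> left_exts (rev ` L) w" "S \<noteq> {}" "left_exts (rev ` L) w - S \<noteq> {}"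
    then show "\<exists>d x y. x \<in> S \<and> y \<in> left_exts (rev ` L) w - S
      \<and> x # w @ [d] \<in> rev ` L \<and> y # w @ [d] \<in> rev ` L"
      using right_cut_crossed[of "rev w" S] by (auto simp: in_rev_image_iff left_exts_rev_image)
  next
    fix w T
    assume "w \<in> rev ` L" "T \<subseteq> right_exts (rev ` L) w" "T \<noteq> {}" "right_exts (rev ` L) w - T \<noteq> {}"
    then show "\<exists>e x y. x \<in> T \<and> y \<in> right_exts (rev ` L) w - T
      \<and> e # w @ [x] \<in> rev ` L \<and> e # w @ [y] \<in> rev ` L"
      using left_cut_crossed[of "rev w" T] by (auto simp: in_rev_image_iff right_exts_rev_image)
  next
    fix x y d e w
    assume "x \<noteq> y" "d \<noteq> e" "x # w @ [d] \<in> rev ` L" "y # w @ [d] \<in> rev ` L" "x # w @ [e] \<in> rev ` L"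
    then show "y # w @ [e] \<notin> rev ` L"
      using no_square[where x=d and y=e and d=x and e=y and w="rev w"] by (simp add: in_rev_image_iff)
  next
    fix b show "\<exists>R. \<forall>w\<in>rev ` L. length w \<ge> R \<longrightarrow> b \<in> set w"
      using uniformly_recurrent[of b] by auto
  qed (fact linear_rR linear_rL)+
qed

context planar_dendric_language
begin

lemma long_right_special_exts_consecutive:
  "\<exists>N. \<forall>w\<in>L. length w \<ge> N \<and> card (right_exts L w) \<ge> 2 \<longrightarrow>
     (\<exists>a b. right_exts L w = {a, b} \<and> (consecutive rR a b \<or> consecutive rR b a))"
  using planar_dendric_language.long_left_special_exts_consecutive
    [OF planar_dendric_language_rev[OF planar_dendric_language_axioms]]
  by (metis in_rev_image_iff left_exts_rev_image length_rev rev_rev_ident)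

lemma right_special_of_consecutive_unique:
  assumes "consecutive rR a b"
  shows "\<exists>!w. w \<in> L \<and> length w = n \<and> card (right_exts L w) \<ge> 2 \<and> {a, b} \<subseteq> right_exts L w"
  using planar_dendric_language.left_special_of_consecutive_unique
    [OF planar_dendric_language_rev[OF planar_dendric_language_axioms] assms, of n]
    Ex1_rev_iff[of "\<lambda>w. w \<in> L \<and> length w = n \<and> card (right_exts L w) \<ge> 2 \<and> {a, b} \<subseteq> right_exts L w"]
  by (simp add: in_rev_image_iff left_exts_rev_image)

end

section \<open>Languages of minimal dendric shifts\<close>

lemma lang_appendD:
  assumes "u @ v \<in> lang X"
  shows "u \<in> lang X" "v \<in> lang X"
proof -
  obtain x i where x: "x \<in> X" "\<forall>k<length (u @ v). x (i + int k) = (u @ v) ! k"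
    using assms unfolding lang_def by blast
  show "u \<in> lang X" unfolding lang_def using x
    by (intro CollectI bexI[of _ x] exI[of _ i]) (auto simp: nth_append)
  have "x (i + int (length u) + int k) = v ! k" if "k < length v" for k
    using x(2) that by (auto simp: nth_append add.assoc dest: spec[of _ "length u + k"])
  then show "v \<in> lang X" unfolding lang_def using x(1) by blast
qed

lemma lang_right_extendable: "w \<in> lang X \<Longrightarrow> \<exists>c. w @ [c] \<in> lang X"
proof -
  assume "w \<in> lang X"
  then obtain x i where x: "x \<in> X" "\<forall>k<length w. x (i + int k) = w ! k"
    unfolding lang_def by blast
  define c where "c = x (i + int (length w))"
  have "\<forall>k<length (w @ [c]). x (i + int k) = (w @ [c]) ! k"
    using x(2) by (auto simp: c_def nth_append less_Suc_eq)
  then show ?thesis unfolding lang_def using x(1) by blast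
qed

lemma lang_left_extendable: "w \<in> lang X \<Longrightarrow> \<exists>c. c # w \<in> lang X"
proof -
  assume "w \<in> lang X"
  then obtain x i where x: "x \<in> X" "\<forall>k<length w. x (i + int k) = w ! k"
    unfolding lang_def by blast
  have "x (i - 1 + int k) = (x (i - 1) # w) ! k" if "k < length (x (i - 1) # w)" for k
  proof (cases k)
    case (Suc k') then show ?thesis using x(2) that by simp
  qed simp
  then show ?thesis unfolding lang_def using x(1) by blast
qed

lemma ext_in_lang_exts:
  assumes "a # w @ [b] \<in> lang X"
  shows "w \<in> lang X" "a \<in> left_exts (lang X) w" "b \<in> right_exts (lang X) w"
  using lang_appendD[of "a # w" "[b]"] lang_appendD[of "[a]" "w @ [b]"] lang_appendD[of w "[b]"]
    assms
  by (auto simp: left_exts_def right_exts_def)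

lemma extL_eq_left_exts: "extL X w = left_exts (lang X) w"
  by (simp add: extL_def left_exts_def)

lemma extR_eq_right_exts: "extR X w = right_exts (lang X) w"
  by (simp add: extR_def right_exts_def)

lemma graph_connected_closed_set:
  assumes "graph_connected V adj" "u \<in> V" "v \<in> V" "u \<in> Q"
    and "\<And>p q. p \<in> V \<Longrightarrow> q \<in> V \<Longrightarrow> adj p q \<Longrightarrow> p \<in> Q \<Longrightarrow> q \<in> Q"
  shows "v \<in> Q"
proof -
  have "(u, v) \<in> {(p, q). p \<in> V \<and> q \<in> V \<and> adj p q}\<^sup>*"
    using assms(1-3) unfolding graph_connected_def by blast
  then show ?thesis by (induction rule: rtrancl_induct) (use assms(4,5) in auto)
qed

lemma dendric_connected:
  "dendric X \<Longrightarrow> w \<in> lang X \<Longrightarrow> graph_connected (ext_graph_vertices X w) (ext_graph_adj X w)"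
  unfolding dendric_def graph_tree_def by blast

lemma ext_graph_adjE:
  assumes "ext_graph_adj X w p q"
  obtains a b where "a # w @ [b] \<in> lang X" "p = Inl a" "q = Inr b"
    | a b where "a # w @ [b] \<in> lang X" "p = Inr b" "q = Inl a"
  using assms unfolding ext_graph_adj_def ext_def by blast

lemma dendric_left_cut_crossed:
  assumes "dendric X" "w \<in> lang X"
    and S: "S \<subseteq> left_exts (lang X) w" "x0 \<in> S" "y0 \<in> left_exts (lang X) w - S"
  shows "\<exists>d x y. x \<in> S \<and> y \<in> left_exts (lang X) w - S
    \<and> x # w @ [d] \<in> lang X \<and> y # w @ [d] \<in> lang X"
proof (rule ccontr)
  assume no_crossing: "\<not> ?thesis"
  define Q where "Q = Inl ` S \<union> Inr ` {d. \<exists>x\<in>S. x # w @ [d] \<in> lang X}"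
  have "Inl y0 \<in> Q"
  proof (rule graph_connected_closed_set[OF dendric_connected[OF assms(1,2)]])
    show "Inl x0 \<in> ext_graph_vertices X w" "Inl y0 \<in> ext_graph_vertices X w" "Inl x0 \<in> Q"
      using S by (auto simp: ext_graph_vertices_def extL_eq_left_exts Q_def)
  next
    fix p q assume adj: "ext_graph_adj X w p q" and pQ: "p \<in> Q"
    then show "q \<in> Q"
    proof (cases rule: ext_graph_adjE)
      case (1 a b) then show ?thesis using pQ by (auto simp: Q_def)
    next
      case (2 a b)
      then obtain x where "x \<in> S" "x # w @ [b] \<in> lang X" using pQ by (auto simp: Q_def)
      then have "a \<in> S" using no_crossing ext_in_lang_exts(2)[OF 2(1)] 2(1) by blast
      then show ?thesis using 2 by (simp add: Q_def)
    qed
  qed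
  then show False using S by (auto simp: Q_def)
qed

lemma dendric_right_cut_crossed:
  assumes "dendric X" "w \<in> lang X"
    and T: "T \<subseteq> right_exts (lang X) w" "x0 \<in> T" "y0 \<in> right_exts (lang X) w - T"
  shows "\<exists>e x y. x \<in> T \<and> y \<in> right_exts (lang X) w - T
    \<and> e # w @ [x] \<in> lang X \<and> e # w @ [y] \<in> lang X"
proof (rule ccontr)
  assume no_crossing: "\<not> ?thesis"
  define Q where "Q = Inr ` T \<union> Inl ` {e. \<exists>x\<in>T. e # w @ [x] \<in> lang X}"
  have "Inr y0 \<in> Q"
  proof (rule graph_connected_closed_set[OF dendric_connected[OF assms(1,2)]])
    show "Inr x0 \<in> ext_graph_vertices X w" "Inr y0 \<in> ext_graph_vertices X w" "Inr x0 \<in> Q"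
      using T by (auto simp: ext_graph_vertices_def extR_eq_right_exts Q_def)
  next
    fix p q assume adj: "ext_graph_adj X w p q" and pQ: "p \<in> Q"
    then show "q \<in> Q"
    proof (cases rule: ext_graph_adjE)
      case (1 a b)
      then obtain x where "x \<in> T" "a # w @ [x] \<in> lang X" using pQ by (auto simp: Q_def)
      then have "b \<in> T" using no_crossing ext_in_lang_exts(3)[OF 1(1)] 1(1) by blast
      then show ?thesis using 1 by (simp add: Q_def)
    next
      case (2 a b) then show ?thesis using pQ by (auto simp: Q_def)
    qed
  qed
  then show False using T by (auto simp: Q_def)
qed

lemma dendric_no_square:
  assumes "dendric X" "x \<noteq> y" "d \<noteq> e"
    and "x # w @ [d] \<in> lang X" "y # w @ [d] \<in> lang X" "x # w @ [e] \<in> lang X"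
  shows "y # w @ [e] \<notin> lang X"
proof
  assume ye: "y # w @ [e] \<in> lang X"
  define vs where "vs = [Inl x, Inr d, Inl y, Inr e]"
  have "graph_acyclic (ext_graph_vertices X w) (ext_graph_adj X w)"
    using assms(1) ext_in_lang_exts(1)[OF assms(4)] unfolding dendric_def graph_tree_def by blast
  moreover have "set vs \<subseteq> ext_graph_vertices X w"
    using assms(4) ye ext_in_lang_exts[of x w d] ext_in_lang_exts[of y w e]
    by (auto simp: vs_def ext_graph_vertices_def extL_eq_left_exts extR_eq_right_exts)
  moreover have "ext_graph_adj X w (vs ! i) (vs ! Suc i)" if "Suc i < length vs" for i
  proof -
    have "i = 0 \<or> i = 1 \<or> i = 2" using that by (auto simp: vs_def)
    then show ?thesis using assms(4-6) ye by (auto simp: vs_def ext_graph_adj_def ext_def)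
  qed
  moreover have "ext_graph_adj X w (last vs) (hd vs)"
    using assms(6) by (auto simp: vs_def ext_graph_adj_def ext_def)
  moreover have "length vs \<ge> 3" "distinct vs" using assms(2,3) by (auto simp: vs_def)
  ultimately show False unfolding graph_acyclic_def by blast
qed

section \<open>Uniform recurrence of minimal shifts\<close>

lemma shift_invariant_translate:
  assumes "shift_invariant X" "x \<in> X"
  shows "(\<lambda>j. x (j + k)) \<in> X"
proof (induction k rule: int_induct[where k=0])
  case base then show ?case using assms(2) by simp
next
  case (step1 i)
  then have "shift_map (\<lambda>j. x (j + i)) \<in> X" using assms(1) unfolding shift_invariant_def by blast
  then show ?case by (simp add: shift_map_def algebra_simps)
next
  case (step2 i)
  then obtain y where y: "y \<in> X" "(\<lambda>j. x (j + i)) = shift_map y"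
    using assms(1) unfolding shift_invariant_def by (metis imageE)
  have "y j = x (j + (i - 1))" for j
    using fun_cong[OF y(2), of "j - 1"] by (simp add: shift_map_def algebra_simps)
  then have "y = (\<lambda>j. x (j + (i - 1)))" by (simp add: fun_eq_iff)
  then show ?case using y(1) by simp
qed

lemma points_avoiding_letter_on_window:
  assumes "shift_invariant X" "w \<in> lang X" "length w \<ge> 2 * R + 1" "b \<notin> set w"
  obtains z where "z \<in> X" "\<And>j. \<bar>j\<bar> \<le> int R \<Longrightarrow> z j \<noteq> b"
proof -
  obtain x i where x: "x \<in> X" "\<forall>k<length w. x (i + int k) = w ! k"
    using assms(2) unfolding lang_def by blast
  define z where "z = (\<lambda>j. x (j + (i + int R)))"
  have "z j \<noteq> b" if "\<bar>j\<bar> \<le> int R" for j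
  proof -
    define k where "k = nat (j + int R)"
    have k: "k < length w" "int k = j + int R" using that assms(3) by (auto simp: k_def)
    then have "z j = x (i + int k)" by (simp add: z_def algebra_simps)
    also have "\<dots> = w ! k" using x(2) k(1) by blast
    finally have "z j = w ! k" .
    then show ?thesis using k(1) assms(4) by (metis nth_mem)
  qed
  moreover have "z \<in> X" unfolding z_def using shift_invariant_translate[OF assms(1) x(1)] .
  ultimately show ?thesis using that by blast
qed

lemma closedin_coordinate_avoiding: "closedin full_shift_top {y :: int \<Rightarrow> 'a. y j \<noteq> b}"
proof -
  have "closedin full_shift_top {y \<in> topspace (full_shift_top :: (int \<Rightarrow> 'a) topology). y j \<in> UNIV - {b}}"
    unfolding full_shift_top_def
    by (rule closedin_continuous_map_preimage[OF continuous_map_product_projection]) auto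
  then show ?thesis by (simp add: full_shift_top_def)
qed

lemma closedin_avoiding_letter: "closedin full_shift_top {y :: int \<Rightarrow> 'a. \<forall>j. y j \<noteq> b}"
proof -
  have "closedin full_shift_top (\<Inter>j. {y :: int \<Rightarrow> 'a. y j \<noteq> b})"
    by (rule closedin_Inter) (auto intro: closedin_coordinate_avoiding)
  moreover have "(\<Inter>j. {y :: int \<Rightarrow> 'a. y j \<noteq> b}) = {y. \<forall>j. y j \<noteq> b}" by auto
  ultimately show ?thesis by simp
qed

lemma compact_space_full_shift: "compact_space (full_shift_top :: (int \<Rightarrow> 'a::finite) topology)"
  unfolding full_shift_top_def compact_space_product_topology
  by (simp add: compact_space_discrete_topology)

lemma point_avoiding_letter:
  assumes "shift_space X" "\<And>R. \<exists>w\<in>lang X. length w \<ge> R \<and> b \<notin> set w"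
  obtains p where "p \<in> X" "\<And>j. p j \<noteq> b"
proof -
  define U where "U = (\<lambda>j. {y :: int \<Rightarrow> 'a. y j \<noteq> b}) ` UNIV"
  have "X \<inter> \<Inter>F \<noteq> {}" if F: "finite F" "F \<subseteq> U" for F
  proof -
    obtain J where J: "finite J" "F = (\<lambda>j. {y. y j \<noteq> b}) ` J"
      using finite_subset_image[OF F(1), of "\<lambda>j. {y. y j \<noteq> b}" UNIV] F(2) unfolding U_def by blast
    define R where "R = Max (insert 0 ((\<lambda>j. nat \<bar>j\<bar>) ` J))"
    have "\<bar>j\<bar> \<le> int R" if "j \<in> J" for j
    proof -
      have "nat \<bar>j\<bar> \<le> R" unfolding R_def using J(1) that by (intro Max_ge) auto
      then show ?thesis by linarith
    qed
    moreover obtain w where "w \<in> lang X" "length w \<ge> 2 * R + 1" "b \<notin> set w" using assms(2) by blast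
    ultimately obtain z where "z \<in> X" "\<And>j. j \<in> J \<Longrightarrow> z j \<noteq> b"
      using points_avoiding_letter_on_window assms(1) unfolding shift_space_def by metis
    then show ?thesis using J(2) by blast
  qed
  moreover have "compactin full_shift_top X"
    using closedin_compact_space[OF compact_space_full_shift] assms(1) unfolding shift_space_def by blast
  moreover have "\<forall>C\<in>U. closedin full_shift_top C" by (auto simp: U_def intro: closedin_coordinate_avoiding)
  ultimately have "X \<inter> \<Inter>U \<noteq> {}" unfolding compactin_fip by blast
  then show ?thesis using that by (auto simp: U_def)
qed

lemma shift_invariant_avoiding:
  assumes "shift_invariant X"
  shows "shift_invariant (X \<inter> {y. \<forall>j. y j \<noteq> b})"
  unfolding shift_invariant_def
proof
  show "shift_map ` (X \<inter> {y. \<forall>j. y j \<noteq> b}) \<subseteq> X \<inter> {y. \<forall>j. y j \<noteq> b}"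
    using assms by (auto simp: shift_invariant_def shift_map_def)
  show "X \<inter> {y. \<forall>j. y j \<noteq> b} \<subseteq> shift_map ` (X \<inter> {y. \<forall>j. y j \<noteq> b})"
  proof
    fix y assume y: "y \<in> X \<inter> {y. \<forall>j. y j \<noteq> b}"
    then obtain y' where "y' \<in> X" "y = shift_map y'" using assms unfolding shift_invariant_def by blast
    moreover from this have "y' j \<noteq> b" for j
      using y by (simp add: shift_map_def) (metis diff_add_cancel)
    ultimately show "y \<in> shift_map ` (X \<inter> {y. \<forall>j. y j \<noteq> b})" by blast
  qed
qed

text \<open>Otherwise a compactness argument yields a point avoiding the letter, and the points of X
  avoiding it form a nonempty proper subshift.\<close>

lemma minimal_shift_uniformly_recurrent:
  assumes "minimal_shift X"
  shows "\<exists>R. \<forall>w\<in>lang X. length w \<ge> R \<longrightarrow> b \<in> set w"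
proof (rule ccontr)
  assume "\<not> ?thesis"
  then have "\<exists>w\<in>lang X. length w \<ge> R \<and> b \<notin> set w" for R by blast
  moreover have X: "shift_space X" using assms by (simp add: minimal_shift_def)
  ultimately obtain p where "p \<in> X" "\<And>j. p j \<noteq> b" using point_avoiding_letter by blast
  define Y where "Y = X \<inter> {y. \<forall>j. y j \<noteq> b}"
  have "Y \<noteq> {}" using \<open>p \<in> X\<close> \<open>\<And>j. p j \<noteq> b\<close> by (auto simp: Y_def)
  moreover have "closedin full_shift_top Y"
    using X unfolding Y_def shift_space_def by (simp add: closedin_Int closedin_avoiding_letter)
  moreover have "shift_invariant Y"
    using X unfolding Y_def shift_space_def by (simp add: shift_invariant_avoiding)
  moreover have "Y \<subseteq> X" by (simp add: Y_def)
  ultimately have "Y = X" using assms unfolding minimal_shift_def by blast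
  moreover obtain x i where "x \<in> X" "x i = b"
    using X unfolding shift_space_def lang_def by fastforce
  ultimately show False by (auto simp: Y_def)
qed

lemma planar_dendric_language_lang:
  assumes "minimal_shift X" and "dendric X"
    and "linear_order_on UNIV rL" and "linear_order_on UNIV rR"
    and "planar X rL rR"
  shows "planar_dendric_language (lang X) rL rR"
proof
  fix u v assume "u @ v \<in> lang X"
  then show "u \<in> lang X" "v \<in> lang X" by (fact lang_appendD)+
next
  fix w assume "w \<in> lang X"
  then show "\<exists>c. w @ [c] \<in> lang X" "\<exists>c. c # w \<in> lang X"
    by (fact lang_right_extendable lang_left_extendable)+
next
  fix a show "[a] \<in> lang X" using assms(1) by (simp add: minimal_shift_def shift_space_def)
next
  fix a1 w b1 a2 b2
  assume "a1 # w @ [b1] \<in> lang X" "a2 # w @ [b2] \<in> lang X" "(a1, a2) \<in> rL" "a1 \<noteq> a2"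
  moreover have "planar_word X rL rR w"
    using assms(5) ext_in_lang_exts(1)[OF \<open>a1 # w @ [b1] \<in> lang X\<close>] unfolding planar_def by blast
  ultimately show "(b1, b2) \<in> rR" unfolding planar_word_def ext_def by blast
next
  fix w S
  assume "w \<in> lang X" "S \<subseteq> left_exts (lang X) w" "S \<noteq> {}" "left_exts (lang X) w - S \<noteq> {}"
  then show "\<exists>d x y. x \<in> S \<and> y \<in> left_exts (lang X) w - S
    \<and> x # w @ [d] \<in> lang X \<and> y # w @ [d] \<in> lang X"
    using dendric_left_cut_crossed[OF assms(2)] by blast
next
  fix w T
  assume "w \<in> lang X" "T \<subseteq> right_exts (lang X) w" "T \<noteq> {}" "right_exts (lang X) w - T \<noteq> {}"
  then show "\<exists>e x y. x \<in> T \<and> y \<in> right_exts (lang X) w - T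
    \<and> e # w @ [x] \<in> lang X \<and> e # w @ [y] \<in> lang X"
    using dendric_right_cut_crossed[OF assms(2)] by blast
next
  fix x y d e w
  assume "x \<noteq> y" "d \<noteq> e" "x # w @ [d] \<in> lang X" "y # w @ [d] \<in> lang X" "x # w @ [e] \<in> lang X"
  then show "y # w @ [e] \<notin> lang X" by (rule dendric_no_square[OF assms(2)])
next
  fix b show "\<exists>R. \<forall>w\<in>lang X. length w \<ge> R \<longrightarrow> b \<in> set w"
    by (rule minimal_shift_uniformly_recurrent[OF assms(1)])
qed (fact assms)+

theorem mainTheorem17:
  fixes X :: "(int \<Rightarrow> 'a::finite) set" and rL rR :: "'a rel"
  assumes "minimal_shift X" and "dendric X"
    and "linear_order_on UNIV rL" and "linear_order_on UNIV rR"
    and "planar X rL rR"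
  shows "(\<exists>N. \<forall>w\<in>lang X. length w \<ge> N \<and> left_special X w \<longrightarrow>
              (\<exists>a b. extL X w = {a, b} \<and> (consecutive rL a b \<or> consecutive rL b a)))
       \<and> (\<forall>a b n. consecutive rL a b \<longrightarrow>
              (\<exists>!w. w \<in> lang X \<and> length w = n \<and> left_special X w \<and> {a, b} \<subseteq> extL X w))
       \<and> (\<exists>N. \<forall>w\<in>lang X. length w \<ge> N \<and> right_special X w \<longrightarrow>
              (\<exists>a b. extR X w = {a, b} \<and> (consecutive rR a b \<or> consecutive rR b a)))
       \<and> (\<forall>a b n. consecutive rR a b \<longrightarrow>
              (\<exists>!w. w \<in> lang X \<and> length w = n \<and> right_special X w \<and> {a, b} \<subseteq> extR X w))"
proof -
  interpret planar_dendric_language "lang X" rL rR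
    using planar_dendric_language_lang[OF assms] .
  show ?thesis
    unfolding left_special_def right_special_def extL_eq_left_exts extR_eq_right_exts
    using long_left_special_exts_consecutive left_special_of_consecutive_unique
      long_right_special_exts_consecutive right_special_of_consecutive_unique
    by blast
qed

end
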